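(* Let $p$ be an odd prime and let $G_p=W_p/Z(W_p)$, where $W_p=C_2\wr C_p$. Then $\mathrm{diam}_{\max}(G_p)\le \frac{13}{2}(p-1)$.
   Context: The wreath product $W_p=C_2\wr C_p$ is $U\rtimes C_p$ with $U=\mathbb{F}_2^{\,p}$ and a generator of the cyclic group $C_p$ acting by cyclically permuting coordinates. Its center is $Z(W_p)=\{(0,\dots,0),(1,\dots,1)\}$ (of order 2), so $G_p=V\rtimes C$ where $V=U/Z(W_p)$ has dimension $p-1$ over $\mathbb{F}_2$ and $C$ is cyclic of order $p$. For a finite group $G$ and generating set $X$, $\mathrm{diam}(G,X)$ is the smallest $k$ such that every element of $G$ is a product of at most $k$ elements of $X\cup X^{-1}$ (the diameter of the undirected Cayley graph), and $\mathrm{diam}_{\max}(G)=\max\{\mathrm{diam}(G,X): X\subseteq G,\ \langle X\rangle=G\}$. *)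

theory Defs
  imports Complex_Main "HOL-Algebra.Coset" "HOL-Algebra.Generated_Groups" "HOL-Computational_Algebra.Primes"
begin

text \<open>Cyclic shift of coordinates of a vector in F_2^p (vectors are functions
  nat => bool, with value False outside {0..<p}); a in C_p acts by shifting by a.\<close>
definition cshift :: "nat \<Rightarrow> nat \<Rightarrow> (nat \<Rightarrow> bool) \<Rightarrow> (nat \<Rightarrow> bool)" where
  "cshift p a v = (\<lambda>i. if i < p then v ((i + p - a mod p) mod p) else False)"

definition wreath_mult :: "nat \<Rightarrow> (nat \<Rightarrow> bool) \<times> nat \<Rightarrow> (nat \<Rightarrow> bool) \<times> nat \<Rightarrow> (nat \<Rightarrow> bool) \<times> nat" where
  "wreath_mult p x y = ((\<lambda>i. fst x i \<noteq> cshift p (snd x) (fst y) i), (snd x + snd y) mod p)"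

definition wreath :: "nat \<Rightarrow> ((nat \<Rightarrow> bool) \<times> nat) monoid" where
  "wreath p = \<lparr> carrier = {x. (\<forall>i\<ge>p. fst x i = False) \<and> snd x < p},
      monoid.mult = wreath_mult p, one = ((\<lambda>_. False), 0) \<rparr>"

definition group_center :: "('a, 'b) monoid_scheme \<Rightarrow> 'a set" where
  "group_center G = {z \<in> carrier G. \<forall>g \<in> carrier G. z \<otimes>\<^bsub>G\<^esub> g = g \<otimes>\<^bsub>G\<^esub> z}"

definition Gp :: "nat \<Rightarrow> ((nat \<Rightarrow> bool) \<times> nat) set monoid" where
  "Gp p = wreath p Mod group_center (wreath p)"

definition word_prod :: "('a, 'b) monoid_scheme \<Rightarrow> 'a list \<Rightarrow> 'a" where
  "word_prod G ws = foldr (\<lambda>x y. x \<otimes>\<^bsub>G\<^esub> y) ws \<one>\<^bsub>G\<^esub>"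

definition cayley_diam :: "('a, 'b) monoid_scheme \<Rightarrow> 'a set \<Rightarrow> nat" where
  "cayley_diam G S = (LEAST k. \<forall>g \<in> carrier G. \<exists>ws.
      set ws \<subseteq> S \<union> m_inv G ` S \<and> length ws \<le> k \<and> g = word_prod G ws)"

definition diam_max :: "('a, 'b) monoid_scheme \<Rightarrow> nat" where
  "diam_max G = Sup {cayley_diam G S | S. S \<subseteq> carrier G \<and> generate G S = carrier G}"

end

(*
  Some lift t of the generators rotates the coordinates by c <> 0, and every element of W_p is
  (e, 0) t^k with k < p; its commutator with t is the translation by e + rot_c e.  For a
  rot_c-invariant subspace M, the elements (e, 0) t^k with e + rot_c e in M form a subgroup.
  Taking for M the span of the all-ones vector and the rotated commutator vectors of the
  generators, generation modulo the centre puts every e + rot_c e into M.  For odd p every vector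
  is such a difference up to a constant, so M is all of F_2^p; as F_2^p modulo the all-ones
  vector has dimension p - 1, every vector is, up to a constant, a sum of at most p - 1 rotated
  commutator vectors.  Grouping these by rotation gives a word (commutators) t (commutators) t ...
  of length at most 4 (p - 1) + p for some (e, 0) t^p, and t^k adds k < p letters; up to a
  central factor this reaches every element, and 6 p - 5 <= 13 (p - 1) / 2.
*)
theory Submission
  imports Defs "HOL-Library.Z2" "HOL-Library.Function_Algebras"
begin

(* keep + on bit as the addition of F_2 instead of rewriting it to XOR *)
declare add_bit_eq_xor [simp del] mult_bit_eq_and [simp del]

section \<open>Vectors over \<open>\<bbbF>\<^sub>2\<close> and their cyclic rotation\<close>

definition vecs :: "nat \<Rightarrow> (nat \<Rightarrow> bit) set" where
  "vecs p = {e. \<forall>i\<ge>p. e i = 0}"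

definition ones :: "nat \<Rightarrow> nat \<Rightarrow> bit" where
  "ones p = (\<lambda>i. if i < p then 1 else 0)"

definition rot :: "nat \<Rightarrow> nat \<Rightarrow> (nat \<Rightarrow> bit) \<Rightarrow> nat \<Rightarrow> bit" where
  "rot p a e = (\<lambda>i. if i < p then e ((i + p - a mod p) mod p) else 0)"

definition bits :: "(nat \<Rightarrow> bool) \<Rightarrow> nat \<Rightarrow> bit" where
  "bits u = (\<lambda>i. of_bool (u i))"

lemma bit_add_self [simp]: "(x :: bit) + x = 0"
  by (cases x) simp_all

lemma bitvec_add_self [simp]: "(e :: 'a \<Rightarrow> bit) + e = 0"
  by (simp add: fun_eq_iff)

lemma bitvec_add_eq_0_iff [simp]: "(e :: 'a \<Rightarrow> bit) + e' = 0 \<longleftrightarrow> e = e'"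
proof -
  have "(x :: bit) + y = 0 \<longleftrightarrow> x = y" for x y
    by (cases x; cases y) simp_all
  then show ?thesis
    by (simp add: fun_eq_iff)
qed

lemma vecs_zero [simp]: "0 \<in> vecs p"
  by (simp add: vecs_def)

lemma vecs_add [simp]: "e \<in> vecs p \<Longrightarrow> e' \<in> vecs p \<Longrightarrow> e + e' \<in> vecs p"
  by (simp add: vecs_def)

lemma vecs_sum: "(\<And>x. x \<in> A \<Longrightarrow> f x \<in> vecs p) \<Longrightarrow> (\<Sum>x\<in>A. f x) \<in> vecs p"
  by (induction A rule: infinite_finite_induct) simp_all

lemma ones_in_vecs [simp]: "ones p \<in> vecs p"
  by (simp add: vecs_def ones_def)

lemma zero_ones_add: "a \<in> {0, ones p} \<Longrightarrow> b \<in> {0, ones p} \<Longrightarrow> a + b \<in> {0, ones p}"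
  by auto

lemma zero_ones_in_vecs: "a \<in> {0, ones p} \<Longrightarrow> a \<in> vecs p"
  by auto

lemma int_mod_sub:
  fixes p i a :: nat
  assumes "0 < p"
  shows "int ((i + p - a mod p) mod p) = (int i - int a) mod int p"
proof -
  have "a mod p \<le> i + p"
    using assms by (meson mod_le_divisor trans_le_add2)
  then have "int ((i + p - a mod p) mod p) = (int i + int p - int (a mod p)) mod int p"
    by (simp add: zmod_int)
  also have "\<dots> = (int i - int (a mod p)) mod int p"
    by (metis add.commute add_diff_eq mod_add_self1)
  also have "\<dots> = (int i - int a) mod int p"
    by (simp add: zmod_int mod_diff_right_eq)
  finally show ?thesis .
qed

lemma mod_sub_mod_sub:
  fixes p i a b :: nat
  assumes "0 < p"
  shows "((i + p - a mod p) mod p + p - b mod p) mod p = (i + p - (a + b) mod p) mod p"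
proof -
  have "int (((i + p - a mod p) mod p + p - b mod p) mod p) = (int i - int a - int b) mod int p"
    using assms by (simp add: int_mod_sub mod_diff_left_eq)
  also have "\<dots> = int ((i + p - (a + b) mod p) mod p)"
    using assms by (simp add: int_mod_sub algebra_simps)
  finally show ?thesis
    by linarith
qed

lemma rot_rot: "0 < p \<Longrightarrow> rot p a (rot p b e) = rot p (a + b) e"
  by (simp add: rot_def mod_sub_mod_sub fun_eq_iff)

lemma rot_mod [simp]: "rot p (a mod p) e = rot p a e"
  unfolding rot_def by (simp only: mod_mod_trivial)

lemma rot_add: "rot p a (e + e') = rot p a e + rot p a e'"
  by (simp add: rot_def fun_eq_iff)

lemma rot_zero [simp]: "rot p a 0 = 0"
  by (simp add: rot_def fun_eq_iff)

lemma rot_sum: "rot p a (\<Sum>x\<in>A. f x) = (\<Sum>x\<in>A. rot p a (f x))"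
  using sum_comp_morphism[of "rot p a" f A, OF rot_zero rot_add] unfolding comp_def by (rule sym)

lemma rot_in_vecs [simp]: "rot p a e \<in> vecs p"
  by (simp add: vecs_def rot_def)

lemma rot_multiple: "e \<in> vecs p \<Longrightarrow> p dvd a \<Longrightarrow> rot p a e = e"
  by (auto simp: rot_def vecs_def fun_eq_iff)

lemma rot_ones [simp]: "rot p a (ones p) = ones p"
  by (simp add: rot_def ones_def fun_eq_iff)

lemma rot_zero_ones: "a \<in> {0, ones p} \<Longrightarrow> rot p k a \<in> {0, ones p}"
  by auto

lemma bits_cshift: "bits (cshift p a u) = rot p a (bits u)"
  by (simp add: bits_def rot_def cshift_def fun_eq_iff)

lemma bits_xor: "bits (\<lambda>i. u i \<noteq> v i) = bits u + bits v"
  by (simp add: bits_def fun_eq_iff)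

lemma bits_inject: "bits u = bits v \<longleftrightarrow> u = v"
  by (auto simp: bits_def fun_eq_iff)

lemma bits_in_vecs: "bits u \<in> vecs p \<longleftrightarrow> (\<forall>i\<ge>p. \<not> u i)"
  by (simp add: bits_def vecs_def)

lemma rot_invariant_const:
  fixes p c :: nat
  assumes p: "prime p" and c: "\<not> p dvd c" and e: "e \<in> vecs p" and inv: "rot p c e = e"
  shows "e \<in> {0, ones p}"
proof -
  have p0: "0 < p"
    using p prime_gt_0_nat by blast
  have multiples: "rot p (j * c) e = e" for j
  proof (induction j)
    case 0
    show ?case using e by (simp add: rot_multiple)
  next
    case (Suc j)
    then show ?case using inv rot_rot[OF p0, of c "j * c" e] by (simp add: add.commute)
  qed
  obtain x y where xy: "c * x = p * y + 1"
    using bezout_prime[OF p c] by auto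
  have "(a * x * c) mod p = a mod p" for a
  proof -
    have "a * x * c = a + p * (a * y)"
      using arg_cong[OF xy, of "(*) a"] by (simp add: algebra_simps)
    then show ?thesis by simp
  qed
  then have all: "rot p a e = e" for a
    using multiples[of "a * x"] rot_mod by metis
  define b where "b = e 0"
  have "e i = (if i < p then b else 0)" for i
  proof (cases "i < p")
    case True
    then have "rot p i e i = e 0"
      by (simp add: rot_def)
    then show ?thesis using all True by (simp add: b_def)
  next
    case False
    then show ?thesis using e by (simp add: vecs_def)
  qed
  then show ?thesis
    by (cases b) (auto simp: ones_def fun_eq_iff)
qed

lemma rot_orbit_sum:
  assumes "0 < p" "e \<in> vecs p"
  shows "rot p c (\<Sum>j<p. rot p (j * c) e) = (\<Sum>j<p. rot p (j * c) e)"
proof -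
  let ?F = "\<lambda>j. rot p (j * c) e"
  have "?F 0 = ?F p"
    using assms by (simp add: rot_multiple)
  then have "(\<Sum>j<p. ?F (Suc j)) = (\<Sum>j<p. ?F j)"
    using sum.lessThan_Suc_shift[of ?F p] sum.lessThan_Suc[of ?F p] by (simp add: add.commute)
  then show ?thesis
    using assms(1) by (simp add: rot_sum rot_rot add.commute)
qed

text \<open>The nonzero rotation exponents pair up as \<open>2i + 1, 2i + 2\<close>, which is where \<open>p\<close> odd
  is needed.\<close>

lemma odd_orbit_decomposition:
  fixes p c :: nat
  assumes "odd p" "e \<in> vecs p"
  defines "w \<equiv> \<Sum>i<p div 2. rot p ((2 * i + 1) * c) e"
  shows "e = (\<Sum>j<p. rot p (j * c) e) + (w + rot p c w)"
proof -
  define F where "F j = rot p (j * c) e" for j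
  define n where "n = p div 2"
  have p: "p = Suc (2 * n)" "0 < p"
    using assms(1) by (simp_all add: n_def odd_pos)
  have shift: "rot p c (F (2 * i + 1)) = F (2 * i + 2)" for i
    using p(2) by (simp add: F_def rot_rot algebra_simps)
  have "w = (\<Sum>i<n. F (2 * i + 1))"
    unfolding w_def n_def F_def ..
  then have "w + rot p c w = (\<Sum>i<n. F (2 * i + 1) + F (2 * i + 2))"
    by (simp only: rot_sum shift sum.distrib)
  also have "\<dots> = (\<Sum>i<2 * n. F (Suc i))"
    by (induction n) (simp_all add: add.assoc)
  finally have diff: "w + rot p c w = (\<Sum>i<2 * n. F (Suc i))" .
  have "(\<Sum>j<p. F j) = F 0 + (\<Sum>i<2 * n. F (Suc i))"
    unfolding p(1) by (rule sum.lessThan_Suc_shift)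
  moreover have "F 0 = e"
    using assms(2) by (simp add: F_def rot_multiple)
  ultimately have "(\<Sum>j<p. F j) = e + (w + rot p c w)"
    by (simp add: diff)
  then show ?thesis
    by (simp add: F_def add.assoc)
qed

lemma vecs_eq_const_plus_diff:
  fixes p c :: nat
  assumes "prime p" "odd p" "\<not> p dvd c" "e \<in> vecs p"
  shows "\<exists>w\<in>vecs p. e + (w + rot p c w) \<in> {0, ones p}"
proof -
  define w where "w = (\<Sum>i<p div 2. rot p ((2 * i + 1) * c) e)"
  define N where "N = (\<Sum>j<p. rot p (j * c) e)"
  have "0 < p"
    using assms(1) prime_gt_0_nat by blast
  then have "N \<in> {0, ones p}"
    unfolding N_def using assms rot_orbit_sum[OF \<open>0 < p\<close> assms(4)]
    by (intro rot_invariant_const) (simp_all add: vecs_sum)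
  moreover have "e = N + (w + rot p c w)"
    unfolding N_def w_def by (rule odd_orbit_decomposition[OF assms(2,4)])
  then have "e + (w + rot p c w) = N"
    by (simp add: add.assoc)
  moreover have "w \<in> vecs p"
    unfolding w_def by (simp add: vecs_sum)
  ultimately show ?thesis
    by auto
qed

section \<open>Subset sums in \<open>\<bbbF>\<^sub>2\<^sup>m\<close>\<close>

lemma vecs_eq_image_Pow: "vecs m = (\<lambda>A i. of_bool (i \<in> A)) ` Pow {..<m}"
proof
  show "vecs m \<subseteq> (\<lambda>A i. of_bool (i \<in> A)) ` Pow {..<m}"
  proof
    fix e :: "nat \<Rightarrow> bit"
    assume "e \<in> vecs m"
    then have "e = (\<lambda>i. of_bool (i \<in> {i. i < m \<and> e i = 1}))"
      by (auto simp: vecs_def fun_eq_iff)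
    then show "e \<in> (\<lambda>A i. of_bool (i \<in> A)) ` Pow {..<m}"
      by blast
  qed
qed (auto simp: vecs_def)

lemma finite_vecs: "finite (vecs m)"
  by (simp add: vecs_eq_image_Pow)

lemma card_vecs_le: "card (vecs m) \<le> 2 ^ m"
  unfolding vecs_eq_image_Pow by (metis card_image_le card_Pow card_lessThan finite_Pow_iff finite_lessThan)

lemma sum_sym_diff:
  fixes f :: "'a \<Rightarrow> 'i \<Rightarrow> bit"
  assumes "finite A" "finite B"
  shows "sum f (sym_diff A B) = sum f A + sum f B"
proof -
  have "sum f A + sum f B = (sum f (A \<inter> B) + sum f (A \<inter> B)) + (sum f (A - B) + sum f (B - A))"
    using sum.Int_Diff[OF assms(1), of f B] sum.Int_Diff[OF assms(2), of f A]
    by (simp add: Int_commute add_ac)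
  also have "\<dots> = sum f ((A - B) \<union> (B - A))"
    using assms by (simp add: sum.union_disjoint Diff_Int_distrib2)
  finally show ?thesis ..
qed

text \<open>Pigeonhole: \<open>R\<close> has more subsets than \<open>vecs m\<close> has elements, and the symmetric difference
  of two subsets with equal sums has sum \<open>0\<close>.\<close>

lemma exists_zero_sum_subset:
  fixes f :: "'a \<Rightarrow> nat \<Rightarrow> bit"
  assumes R: "finite R" "\<And>x. x \<in> R \<Longrightarrow> f x \<in> vecs m" and big: "m < card R"
  shows "\<exists>D\<subseteq>R. D \<noteq> {} \<and> sum f D = 0"
proof -
  have img: "sum f ` Pow R \<subseteq> vecs m"
    using R(2) by (auto intro: vecs_sum)
  have "card (vecs m) < 2 ^ card R"
    by (rule le_less_trans[OF card_vecs_le]) (use big in simp)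
  then have "card (vecs m) < card (Pow R)"
    by (simp add: card_Pow R(1))
  then have "\<not> inj_on (sum f) (Pow R)"
    using card_inj_on_le[OF _ img finite_vecs] by fastforce
  then obtain A B where AB: "A \<subseteq> R" "B \<subseteq> R" "A \<noteq> B" "sum f A = sum f B"
    unfolding inj_on_def by blast
  have "finite A" "finite B"
    using AB(1,2) R(1) finite_subset by blast+
  then have "sum f (sym_diff A B) = 0"
    using AB(4) by (simp add: sum_sym_diff)
  moreover have "sym_diff A B \<subseteq> R" "sym_diff A B \<noteq> {}"
    using AB(1-3) by auto
  ultimately show ?thesis
    by blast
qed

lemma subset_with_same_sum:
  fixes f :: "'a \<Rightarrow> nat \<Rightarrow> bit"
  assumes "finite R" "\<And>x. x \<in> R \<Longrightarrow> f x \<in> vecs m"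
  shows "\<exists>R'\<subseteq>R. card R' \<le> m \<and> sum f R' = sum f R"
  using assms
proof (induction "card R" arbitrary: R rule: less_induct)
  case less
  show ?case
  proof (cases "card R \<le> m")
    case True
    then show ?thesis by blast
  next
    case False
    then obtain D where D: "D \<subseteq> R" "D \<noteq> {}" "sum f D = 0"
      using exists_zero_sum_subset[OF less.prems] by (meson not_le)
    have "card (R - D) < card R"
      using D less.prems(1) by (intro psubset_card_mono) auto
    then obtain R' where R': "R' \<subseteq> R - D" "card R' \<le> m" "sum f R' = sum f (R - D)"
      using less.hyps[of "R - D"] less.prems by auto
    moreover have "sum f (R - D) = sum f R"
      using sum.subset_diff[OF D(1) less.prems(1), of f] D(3) by simp
    moreover have "R' \<subseteq> R"
      using R'(1) by blast
    ultimately show ?thesis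
      by (intro exI[of _ R']) simp
  qed
qed

text \<open>Modulo the all-ones vector \<open>\<bbbF>\<^sub>2\<^sup>p\<close> has dimension \<open>p - 1\<close>; the projection adds
  \<open>ones p\<close> to kill the last coordinate.\<close>

lemma subset_with_same_sum_mod_ones:
  fixes f :: "'a \<Rightarrow> nat \<Rightarrow> bit"
  assumes "0 < p" "finite R" "\<And>x. x \<in> R \<Longrightarrow> f x \<in> vecs p"
  shows "\<exists>R'\<subseteq>R. card R' \<le> p - 1 \<and> sum f R' + sum f R \<in> {0, ones p}"
proof -
  define \<pi> :: "(nat \<Rightarrow> bit) \<Rightarrow> nat \<Rightarrow> bit" where "\<pi> e = e + (\<lambda>i. e (p - 1) * ones p i)" for e
  have \<pi>_add: "\<pi> (e + e') = \<pi> e + \<pi> e'" for e e'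
    by (simp add: \<pi>_def fun_eq_iff distrib_right add_ac)
  have \<pi>_sum: "\<pi> (sum f A) = (\<Sum>x\<in>A. \<pi> (f x))" for A
    using sum_comp_morphism[of \<pi> f A, OF _ \<pi>_add] by (simp add: \<pi>_def comp_def zero_fun_def)
  have "\<pi> e \<in> vecs (p - 1)" if "e \<in> vecs p" for e
    unfolding vecs_def
  proof (intro CollectI allI impI)
    fix i
    assume "p - 1 \<le> i"
    then consider "i = p - 1" | "p \<le> i"
      by linarith
    then show "\<pi> e i = 0"
      using that assms(1) by cases (simp_all add: \<pi>_def vecs_def ones_def)
  qed
  then obtain R' where R': "R' \<subseteq> R" "card R' \<le> p - 1" "\<pi> (sum f R') = \<pi> (sum f R)"
    using subset_with_same_sum[OF assms(2), of "\<lambda>x. \<pi> (f x)" "p - 1"] assms(3)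
    by (auto simp: \<pi>_sum)
  define s where "s = sum f R' + sum f R"
  have "\<pi> s = 0"
    using R'(3) by (simp add: s_def \<pi>_add)
  then have s_eq: "s = (\<lambda>i. s (p - 1) * ones p i)"
    by (simp add: \<pi>_def)
  have "(\<lambda>i. b * ones p i) \<in> {0, ones p}" for b :: bit
    by (cases b) (simp_all add: fun_eq_iff)
  then have "s \<in> {0, ones p}"
    by (subst s_eq)
  then have "sum f R' + sum f R \<in> {0, ones p}"
    by (simp add: s_def)
  with R' show ?thesis by blast
qed

section \<open>Coordinates on the wreath product\<close>

definition vec :: "(nat \<Rightarrow> bool) \<times> nat \<Rightarrow> nat \<Rightarrow> bit" where
  "vec g = bits (fst g)"

definition transl :: "(nat \<Rightarrow> bit) \<Rightarrow> (nat \<Rightarrow> bool) \<times> nat" where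
  "transl e = ((\<lambda>i. e i = 1), 0)"

lemma vec_transl [simp]: "vec (transl e) = e"
proof -
  have "of_bool (b = 1) = b" for b :: bit
    by (cases b) simp_all
  then show ?thesis
    by (simp add: vec_def transl_def bits_def fun_eq_iff)
qed

lemma snd_transl [simp]: "snd (transl e) = 0"
  by (simp add: transl_def)

lemma wreath_eqI: "vec g = vec h \<Longrightarrow> snd g = snd h \<Longrightarrow> g = h"
  by (simp add: vec_def bits_inject prod_eq_iff)

lemma wreath_carrier_iff: "g \<in> carrier (wreath p) \<longleftrightarrow> vec g \<in> vecs p \<and> snd g < p"
  by (simp add: wreath_def vec_def bits_in_vecs)

lemma vec_mult [simp]: "vec (g \<otimes>\<^bsub>wreath p\<^esub> h) = vec g + rot p (snd g) (vec h)"
proof -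
  have "g \<otimes>\<^bsub>wreath p\<^esub> h = wreath_mult p g h"
    by (simp add: wreath_def)
  then show ?thesis
    by (simp only: wreath_mult_def vec_def fst_conv bits_xor bits_cshift)
qed

lemma snd_mult [simp]: "snd (g \<otimes>\<^bsub>wreath p\<^esub> h) = (snd g + snd h) mod p"
  by (simp add: wreath_def wreath_mult_def)

lemma vec_one [simp]: "vec \<one>\<^bsub>wreath p\<^esub> = 0"
  by (simp add: wreath_def vec_def bits_def fun_eq_iff)

lemma snd_one [simp]: "snd \<one>\<^bsub>wreath p\<^esub> = 0"
  by (simp add: wreath_def)

(* p occurs only on the right-hand side, so simp can use this rule only as transl_zero[of p]. *)
lemma transl_zero: "transl 0 = \<one>\<^bsub>wreath p\<^esub>"
  by (rule wreath_eqI) simp_all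

lemma transl_in_carrier: "0 < p \<Longrightarrow> e \<in> vecs p \<Longrightarrow> transl e \<in> carrier (wreath p)"
  by (simp add: wreath_carrier_iff)

lemma transl_mult: "e' \<in> vecs p \<Longrightarrow> transl e \<otimes>\<^bsub>wreath p\<^esub> transl e' = transl (e + e')"
  by (intro wreath_eqI) (simp_all add: rot_multiple)

lemma mult_transl:
  assumes "g \<in> carrier (wreath p)"
  shows "g \<otimes>\<^bsub>wreath p\<^esub> transl e = transl (rot p (snd g) e) \<otimes>\<^bsub>wreath p\<^esub> g"
  using assms by (intro wreath_eqI) (simp_all add: wreath_carrier_iff rot_multiple add.commute)

lemma wreath_group:
  assumes p: "0 < p"
  shows "group (wreath p)"
proof (rule groupI)
  fix x y
  assume "x \<in> carrier (wreath p)" "y \<in> carrier (wreath p)"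
  then show "x \<otimes>\<^bsub>wreath p\<^esub> y \<in> carrier (wreath p)"
    using p by (simp add: wreath_carrier_iff)
next
  show "\<one>\<^bsub>wreath p\<^esub> \<in> carrier (wreath p)"
    using p by (simp add: wreath_carrier_iff)
next
  fix x y z
  assume "x \<in> carrier (wreath p)" and "y \<in> carrier (wreath p)" and "z \<in> carrier (wreath p)"
  show "x \<otimes>\<^bsub>wreath p\<^esub> y \<otimes>\<^bsub>wreath p\<^esub> z = x \<otimes>\<^bsub>wreath p\<^esub> (y \<otimes>\<^bsub>wreath p\<^esub> z)"
    using p by (intro wreath_eqI) (simp_all add: rot_add rot_rot add_ac mod_add_left_eq mod_add_right_eq)
next
  fix x
  assume "x \<in> carrier (wreath p)"
  then show "\<one>\<^bsub>wreath p\<^esub> \<otimes>\<^bsub>wreath p\<^esub> x = x"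
    by (intro wreath_eqI) (simp_all add: wreath_carrier_iff rot_multiple)
next
  fix x
  assume x: "x \<in> carrier (wreath p)"
  define y where "y = (cshift p (p - snd x) (fst x), (p - snd x) mod p)"
  have vec_y: "vec y = rot p (p - snd x) (vec x)" and snd_y: "snd y = (p - snd x) mod p"
    by (simp_all add: y_def vec_def bits_cshift)
  have "y \<in> carrier (wreath p)"
    using p by (simp add: wreath_carrier_iff vec_y snd_y)
  moreover have "y \<otimes>\<^bsub>wreath p\<^esub> x = \<one>\<^bsub>wreath p\<^esub>"
    using p x by (intro wreath_eqI) (auto simp: vec_y snd_y wreath_carrier_iff mod_add_left_eq rot_rot)
  ultimately show "\<exists>y\<in>carrier (wreath p). y \<otimes>\<^bsub>wreath p\<^esub> x = \<one>\<^bsub>wreath p\<^esub>"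
    by blast
qed

lemma (in group) subgroup_group_center: "subgroup (group_center G) G"
proof (rule subgroupI)
  fix a
  assume "a \<in> group_center G"
  then have a: "a \<in> carrier G" "\<And>g. g \<in> carrier G \<Longrightarrow> a \<otimes> g = g \<otimes> a"
    by (auto simp: group_center_def)
  have "inv a \<otimes> g = g \<otimes> inv a" if g: "g \<in> carrier G" for g
  proof -
    have "inv a \<otimes> g = inv a \<otimes> (g \<otimes> a) \<otimes> inv a"
      using a(1) g by (simp add: m_assoc)
    also have "\<dots> = inv a \<otimes> (a \<otimes> g) \<otimes> inv a"
      using a(2)[OF g] by simp
    also have "\<dots> = g \<otimes> inv a"
      using a(1) g by (simp add: m_assoc[symmetric])
    finally show ?thesis .
  qed
  then show "inv a \<in> group_center G"
    using a(1) by (simp add: group_center_def)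
next
  fix a b
  assume "a \<in> group_center G" "b \<in> group_center G"
  then have a: "a \<in> carrier G" "\<And>g. g \<in> carrier G \<Longrightarrow> a \<otimes> g = g \<otimes> a"
    and b: "b \<in> carrier G" "\<And>g. g \<in> carrier G \<Longrightarrow> b \<otimes> g = g \<otimes> b"
    by (auto simp: group_center_def)
  have "a \<otimes> b \<otimes> g = g \<otimes> (a \<otimes> b)" if g: "g \<in> carrier G" for g
  proof -
    have "a \<otimes> b \<otimes> g = a \<otimes> (g \<otimes> b)"
      using a(1) b g by (simp add: m_assoc)
    also have "\<dots> = g \<otimes> (a \<otimes> b)"
      using a(2)[OF g] a(1) b(1) g by (simp add: m_assoc[symmetric])
    finally show ?thesis .
  qed
  then show "a \<otimes> b \<in> group_center G"
    using a(1) b(1) by (simp add: group_center_def)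
next
  have "\<one> \<in> group_center G"
    by (simp add: group_center_def)
  then show "group_center G \<noteq> {}"
    by blast
qed (simp add: group_center_def)

lemma (in group) group_center_normal: "group_center G \<lhd> G"
proof (rule normal_invI[OF subgroup_group_center])
  fix x h
  assume x: "x \<in> carrier G" and h: "h \<in> group_center G"
  then have "x \<otimes> h = h \<otimes> x" "h \<in> carrier G"
    by (simp_all add: group_center_def)
  then have "x \<otimes> h \<otimes> inv x = h"
    using x by (simp add: m_assoc)
  then show "x \<otimes> h \<otimes> inv x \<in> group_center G"
    using h by simp
qed

lemma transl_central:
  assumes "0 < p" "a \<in> {0, ones p}"
  shows "transl a \<in> group_center (wreath p)"
  unfolding group_center_def
proof (intro CollectI conjI ballI)
  show "transl a \<in> carrier (wreath p)"
    using assms by (auto simp: transl_in_carrier)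
  fix g
  assume "g \<in> carrier (wreath p)"
  then have "vec g \<in> vecs p" "snd g < p"
    by (simp_all add: wreath_carrier_iff)
  then show "transl a \<otimes>\<^bsub>wreath p\<^esub> g = g \<otimes>\<^bsub>wreath p\<^esub> transl a"
    using assms(2) by (intro wreath_eqI) (auto simp: rot_multiple add.commute)
qed

lemma snd_central:
  assumes "0 < p" and z: "z \<in> group_center (wreath p)"
  shows "snd z = 0"
proof (rule ccontr)
  assume nz: "snd z \<noteq> 0"
  define \<delta> :: "nat \<Rightarrow> bit" where "\<delta> i = (if i = 0 then 1 else 0)" for i
  have z_lt: "snd z < p"
    using z by (simp add: group_center_def wreath_carrier_iff)
  have "transl \<delta> \<in> carrier (wreath p)"
    using assms(1) by (intro transl_in_carrier) (simp_all add: vecs_def \<delta>_def)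
  then have "z \<otimes>\<^bsub>wreath p\<^esub> transl \<delta> = transl \<delta> \<otimes>\<^bsub>wreath p\<^esub> z"
    using z by (simp add: group_center_def)
  then have "vec z + rot p (snd z) \<delta> = \<delta> + rot p 0 (vec z)"
    by (metis vec_mult vec_transl snd_transl)
  also have "\<dots> = vec z + \<delta>"
    using z by (simp add: group_center_def wreath_carrier_iff rot_multiple add.commute)
  finally have "rot p (snd z) \<delta> (snd z) = \<delta> (snd z)"
    by simp
  then show False
    using nz z_lt by (simp add: rot_def \<delta>_def)
qed

section \<open>Words in a quotient group\<close>

lemma word_prod_Nil [simp]: "word_prod G [] = \<one>\<^bsub>G\<^esub>"
  by (simp add: word_prod_def)

lemma word_prod_Cons [simp]: "word_prod G (x # xs) = x \<otimes>\<^bsub>G\<^esub> word_prod G xs"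
  by (simp add: word_prod_def)

lemma (in monoid) word_prod_closed: "set xs \<subseteq> carrier G \<Longrightarrow> word_prod G xs \<in> carrier G"
  by (induction xs) simp_all

lemma (in monoid) word_prod_append:
  "set xs \<subseteq> carrier G \<Longrightarrow> set ys \<subseteq> carrier G \<Longrightarrow>
    word_prod G (xs @ ys) = word_prod G xs \<otimes> word_prod G ys"
  by (induction xs) (simp_all add: m_assoc word_prod_closed)

lemma (in monoid) word_prod_replicate: "x \<in> carrier G \<Longrightarrow> word_prod G (replicate k x) = x [^] k"
  by (induction k) (simp_all add: nat_pow_Suc2[symmetric])

lemma (in group_hom) word_prod_map: "set xs \<subseteq> carrier G \<Longrightarrow> word_prod H (map h xs) = h (word_prod G xs)"
  by (induction xs) (simp_all add: G.word_prod_closed)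

lemma (in normal) group_hom_rcoset: "group_hom G (G Mod H) (\<lambda>a. H #> a)"
  by (simp add: group_hom_def group_hom_axioms_def factorgroup_is_group r_coset_hom_Mod)

lemma (in normal) carrier_subset_set_mult_generate:
  assumes X: "X \<subseteq> carrier G" and gen: "generate (G Mod H) ((\<lambda>a. H #> a) ` X) = carrier (G Mod H)"
  shows "carrier G \<subseteq> H <#> generate G X"
proof
  fix g
  assume g: "g \<in> carrier G"
  interpret \<pi>: group_hom G "G Mod H" "\<lambda>a. H #> a"
    by (rule group_hom_rcoset)
  have "H #> g \<in> generate (G Mod H) ((\<lambda>a. H #> a) ` X)"
    using g gen by (simp add: carrier_FactGroup)
  then obtain k where k: "k \<in> generate G X" "H #> g = H #> k"
    using \<pi>.generate_img[OF X] by blast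
  have "g \<in> H #> k"
    using rcos_self[OF g subgroup_axioms] k(2) by simp
  then show "g \<in> H <#> generate G X"
    using k(1) by (auto simp: r_coset_def set_mult_def)
qed

lemma (in normal) cayley_diam_FactGroup_le:
  assumes X: "X \<subseteq> carrier G" "(\<lambda>a. H #> a) ` X \<subseteq> S"
    and words: "\<And>g. g \<in> carrier G \<Longrightarrow>
      \<exists>h\<in>H. \<exists>ws. set ws \<subseteq> X \<union> m_inv G ` X \<and> length ws \<le> d \<and> g = h \<otimes> word_prod G ws"
  shows "cayley_diam (G Mod H) S \<le> d"
  unfolding cayley_diam_def
proof (rule Least_le, intro ballI)
  interpret \<pi>: group_hom G "G Mod H" "\<lambda>a. H #> a"
    by (rule group_hom_rcoset)
  fix c
  assume "c \<in> carrier (G Mod H)"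
  then obtain g where g: "g \<in> carrier G" "c = H #> g"
    by (auto simp: carrier_FactGroup)
  obtain h ws where h: "h \<in> H" and ws: "set ws \<subseteq> X \<union> m_inv G ` X" "length ws \<le> d"
    and gh: "g = h \<otimes> word_prod G ws"
    using words[OF g(1)] by blast
  have ws_carrier: "set ws \<subseteq> carrier G"
    using ws(1) X(1) by auto
  have h_carrier: "h \<in> carrier G"
    using h subset by blast
  have "c = (H #> h) #> word_prod G ws"
    unfolding g(2) gh using h_carrier ws_carrier
    by (intro coset_mult_assoc[symmetric]) (simp_all add: subset word_prod_closed)
  also have "\<dots> = word_prod (G Mod H) (map (\<lambda>a. H #> a) ws)"
    using ws_carrier by (simp add: coset_join2[OF h_carrier subgroup_axioms h] \<pi>.word_prod_map)
  finally have "c = word_prod (G Mod H) (map (\<lambda>a. H #> a) ws)" .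
  moreover have "H #> a \<in> S \<union> m_inv (G Mod H) ` S" if a: "a \<in> X \<union> m_inv G ` X" for a
  proof -
    consider "a \<in> X" | x where "x \<in> X" "a = inv x"
      using a by blast
    then show ?thesis
    proof cases
      case 1
      then show ?thesis using X(2) by blast
    next
      case 2
      then have "H #> a = m_inv (G Mod H) (H #> x)"
        using X(1) by auto
      then show ?thesis using 2(1) X(2) by blast
    qed
  qed
  then have "set (map (\<lambda>a. H #> a) ws) \<subseteq> S \<union> m_inv (G Mod H) ` S"
    unfolding set_map using ws(1) by blast
  ultimately show
    "\<exists>ws. set ws \<subseteq> S \<union> m_inv (G Mod H) ` S \<and> length ws \<le> d \<and> c = word_prod (G Mod H) ws"
    using ws(2) by (intro exI[of _ "map (\<lambda>a. H #> a) ws"]) simp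
qed

section \<open>Normal form with respect to a rotating element\<close>

locale wreath_rotation =
  fixes p :: nat and t :: "(nat \<Rightarrow> bool) \<times> nat"
  assumes prime_p: "prime p" and t_carrier: "t \<in> carrier (wreath p)" and snd_t_nonzero: "snd t \<noteq> 0"
begin

lemma p_pos: "0 < p"
  using prime_p prime_gt_0_nat by blast

sublocale W: group "wreath p"
  by (rule wreath_group[OF p_pos])

abbreviation wmult (infixl "\<cdot>" 70) where "g \<cdot> h \<equiv> g \<otimes>\<^bsub>wreath p\<^esub> h"

abbreviation tpow :: "nat \<Rightarrow> (nat \<Rightarrow> bool) \<times> nat" where "tpow k \<equiv> t [^]\<^bsub>wreath p\<^esub> k"

lemma snd_t_not_dvd: "\<not> p dvd snd t"
  using t_carrier snd_t_nonzero by (auto simp: wreath_carrier_iff dest: dvd_imp_le)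

lemma tpow_carrier [simp]: "tpow k \<in> carrier (wreath p)"
  using t_carrier by simp

lemma snd_tpow: "snd (tpow k) = k * snd t mod p"
  by (induction k) (simp_all add: mod_add_right_eq add.commute)

lemma vec_tpow: "vec (tpow k) = (\<Sum>i<k. rot p (i * snd t) (vec t))"
  by (induction k) (simp_all add: snd_tpow)

lemma tpow_p: "\<exists>w\<in>{0, ones p}. tpow p = transl w"
proof -
  let ?w = "\<Sum>i<p. rot p (i * snd t) (vec t)"
  have "vec t \<in> vecs p"
    using t_carrier by (simp add: wreath_carrier_iff)
  then have "?w \<in> {0, ones p}"
    using prime_p snd_t_not_dvd rot_orbit_sum[OF p_pos] by (intro rot_invariant_const) (simp_all add: vecs_sum)
  moreover have "tpow p = transl ?w"
    by (intro wreath_eqI) (simp_all add: vec_tpow snd_tpow)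
  ultimately show ?thesis
    by blast
qed

lemma tpow_double_p: "tpow (2 * p) = \<one>\<^bsub>wreath p\<^esub>"
proof -
  obtain w where w: "w \<in> {0, ones p}" "tpow p = transl w"
    using tpow_p by blast
  have "tpow (2 * p) = transl w \<cdot> transl w"
    using w(2) W.nat_pow_mult[OF t_carrier, of p p] by (simp add: mult_2)
  also have "\<dots> = \<one>\<^bsub>wreath p\<^esub>"
    using w(1) by (auto simp: transl_mult transl_zero[of p])
  finally show ?thesis .
qed

lemma inv_tpow: "inv\<^bsub>wreath p\<^esub> (tpow k) = tpow ((2 * p - 1) * k)"
proof (rule W.inv_equality)
  have "(2 * p - 1) * k + k = 2 * p * k"
    using p_pos by (cases p) simp_all
  then have "tpow ((2 * p - 1) * k) \<cdot> tpow k = tpow (2 * p * k)"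
    by (simp add: W.nat_pow_mult[OF t_carrier])
  also have "\<dots> = \<one>\<^bsub>wreath p\<^esub>"
    using tpow_double_p W.nat_pow_pow[OF t_carrier, of "2 * p" k] by simp
  finally show "tpow ((2 * p - 1) * k) \<cdot> tpow k = \<one>\<^bsub>wreath p\<^esub>" .
qed simp_all

lemma tpow_transl: "tpow k \<cdot> transl e = transl (rot p (k * snd t) e) \<cdot> tpow k"
  using mult_transl[OF tpow_carrier] by (simp add: snd_tpow)

lemma wreath_normal_form:
  assumes "g \<in> carrier (wreath p)"
  shows "\<exists>e\<in>vecs p. \<exists>k<p. g = transl e \<cdot> tpow k"
proof -
  obtain x y where xy: "snd t * x = p * y + 1"
    using bezout_prime[OF prime_p snd_t_not_dvd] by auto
  define k where "k = snd g * x mod p"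
  have "k * snd t mod p = snd g * (snd t * x) mod p"
    unfolding k_def mod_mult_left_eq by (simp only: ac_simps)
  also have "\<dots> = (snd g + p * (snd g * y)) mod p"
    unfolding xy by (simp add: algebra_simps)
  also have "\<dots> = snd g"
    using assms by (simp add: wreath_carrier_iff)
  finally have snd_k: "snd (tpow k) = snd g"
    by (simp add: snd_tpow)
  define e where "e = vec g + vec (tpow k)"
  have "e \<in> vecs p"
    using assms tpow_carrier[of k] by (simp add: e_def wreath_carrier_iff)
  moreover have "g = transl e \<cdot> tpow k"
    using tpow_carrier[of k] by (intro wreath_eqI) (simp_all add: e_def snd_k rot_multiple wreath_carrier_iff add.assoc)
  moreover have "k < p"
    using p_pos by (simp add: k_def)
  ultimately show ?thesis
    by blast
qed

lemma mult_normal_form: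
  assumes "e \<in> vecs p" "e' \<in> vecs p"
  shows "(transl e \<cdot> tpow k) \<cdot> (transl e' \<cdot> tpow k') = transl (e + rot p (k * snd t) e') \<cdot> tpow (k + k')"
proof -
  have "(transl e \<cdot> tpow k) \<cdot> (transl e' \<cdot> tpow k') = transl e \<cdot> (tpow k \<cdot> transl e') \<cdot> tpow k'"
    using assms p_pos by (simp add: transl_in_carrier W.m_assoc)
  also have "\<dots> = (transl e \<cdot> transl (rot p (k * snd t) e')) \<cdot> (tpow k \<cdot> tpow k')"
    using assms p_pos by (simp add: tpow_transl transl_in_carrier W.m_assoc)
  also have "\<dots> = transl (e + rot p (k * snd t) e') \<cdot> tpow (k + k')"
    by (simp add: transl_mult W.nat_pow_mult[OF t_carrier])
  finally show ?thesis .
qed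

definition diff :: "(nat \<Rightarrow> bit) \<Rightarrow> nat \<Rightarrow> bit" where
  "diff e = e + rot p (snd t) e"

lemma diff_add: "diff (e + e') = diff e + diff e'"
  by (simp add: diff_def rot_add add_ac)

lemma diff_rot: "diff (rot p j e) = rot p j (diff e)"
  using p_pos by (simp add: diff_def rot_add rot_rot add.commute)

lemma commutator_normal_form:
  fixes k :: nat
  assumes "e \<in> vecs p"
  defines "g \<equiv> transl e \<cdot> tpow k"
  shows "g \<cdot> t \<cdot> inv\<^bsub>wreath p\<^esub> g \<cdot> inv\<^bsub>wreath p\<^esub> t = transl (diff e)"
proof -
  have e: "transl e \<in> carrier (wreath p)" "inv\<^bsub>wreath p\<^esub> (transl e) = transl e"
    using assms(1) p_pos by (simp_all add: transl_in_carrier W.inv_equality transl_mult transl_zero[of p])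
  have "g \<cdot> t \<cdot> inv\<^bsub>wreath p\<^esub> g = transl e \<cdot> (tpow k \<cdot> t \<cdot> inv\<^bsub>wreath p\<^esub> (tpow k)) \<cdot> transl e"
    using e t_carrier by (simp add: g_def W.inv_mult_group W.m_assoc)
  also have "\<dots> = transl e \<cdot> t \<cdot> transl e"
    using t_carrier W.nat_pow_Suc2[OF t_carrier, of k] by (simp add: W.m_assoc)
  also have "\<dots> = transl e \<cdot> (transl (rot p (snd t) e) \<cdot> t)"
    using e(1) t_carrier by (simp add: W.m_assoc mult_transl[OF t_carrier])
  also have "\<dots> = transl (e + rot p (snd t) e) \<cdot> t"
    using e(1) t_carrier p_pos by (simp add: W.m_assoc[symmetric] transl_mult transl_in_carrier)
  finally show ?thesis
    using t_carrier p_pos assms(1) by (simp add: diff_def W.m_assoc transl_in_carrier)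
qed

lemma diff_vec_commuting:
  assumes "g \<in> carrier (wreath p)" "snd g = 0" "g \<cdot> t = t \<cdot> g"
  shows "diff (vec g) = 0"
proof -
  have "vec (g \<cdot> t) = vec (t \<cdot> g)"
    using assms(3) by simp
  then show ?thesis
    using assms(1,2) t_carrier by (simp add: diff_def rot_multiple wreath_carrier_iff add.commute)
qed

definition invariant_subspace :: "(nat \<Rightarrow> bit) set \<Rightarrow> bool" where
  "invariant_subspace M \<longleftrightarrow>
    M \<subseteq> vecs p \<and> 0 \<in> M \<and> (\<forall>a\<in>M. \<forall>b\<in>M. a + b \<in> M) \<and> (\<forall>a\<in>M. rot p (snd t) a \<in> M)"

lemma invariant_subspace_rot:
  assumes "invariant_subspace M" "a \<in> M"
  shows "rot p (j * snd t) a \<in> M"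
proof (induction j)
  case 0
  show ?case
    using assms by (auto simp: invariant_subspace_def rot_multiple)
next
  case (Suc j)
  then have "rot p (snd t) (rot p (j * snd t) a) \<in> M"
    using assms(1) by (simp add: invariant_subspace_def)
  then show ?case
    by (simp add: rot_rot[OF p_pos])
qed

definition diff_preimage :: "(nat \<Rightarrow> bit) set \<Rightarrow> ((nat \<Rightarrow> bool) \<times> nat) set" where
  "diff_preimage M = {transl e \<cdot> tpow k | e k. e \<in> vecs p \<and> diff e \<in> M}"

lemma diff_preimageI: "e \<in> vecs p \<Longrightarrow> diff e \<in> M \<Longrightarrow> transl e \<cdot> tpow k \<in> diff_preimage M"
  by (auto simp: diff_preimage_def)

lemma subgroup_diff_preimage:
  assumes M: "invariant_subspace M"
  shows "subgroup (diff_preimage M) (wreath p)"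
proof (rule W.subgroupI)
  show "diff_preimage M \<subseteq> carrier (wreath p)"
    using p_pos by (auto simp: diff_preimage_def transl_in_carrier)
  have "transl 0 \<cdot> tpow 0 \<in> diff_preimage M"
    using M by (intro diff_preimageI) (simp_all add: diff_def invariant_subspace_def)
  then show "diff_preimage M \<noteq> {}"
    by blast
next
  fix g
  assume "g \<in> diff_preimage M"
  then obtain e k where e: "e \<in> vecs p" "diff e \<in> M" and g: "g = transl e \<cdot> tpow k"
    by (auto simp: diff_preimage_def)
  define m where "m = (2 * p - 1) * k"
  have "inv\<^bsub>wreath p\<^esub> g = tpow m \<cdot> transl e"
    using e(1) p_pos by (simp add: g m_def W.inv_mult_group transl_in_carrier inv_tpow
        W.inv_equality transl_mult transl_zero[of p])
  also have "\<dots> = transl (rot p (m * snd t) e) \<cdot> tpow m"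
    by (rule tpow_transl)
  finally show "inv\<^bsub>wreath p\<^esub> g \<in> diff_preimage M"
    using invariant_subspace_rot[OF M e(2)] by (simp add: diff_preimageI diff_rot)
next
  fix g h
  assume "g \<in> diff_preimage M" "h \<in> diff_preimage M"
  then obtain e k e' k' where e: "e \<in> vecs p" "diff e \<in> M" "g = transl e \<cdot> tpow k"
    and e': "e' \<in> vecs p" "diff e' \<in> M" "h = transl e' \<cdot> tpow k'"
    by (auto simp: diff_preimage_def)
  then have "g \<cdot> h = transl (e + rot p (k * snd t) e') \<cdot> tpow (k + k')"
    by (simp add: mult_normal_form)
  moreover have "diff (e + rot p (k * snd t) e') \<in> M"
    using M e(2) invariant_subspace_rot[OF M e'(2)]
    by (simp add: diff_add diff_rot invariant_subspace_def)
  ultimately show "g \<cdot> h \<in> diff_preimage M"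
    using e(1) by (simp add: diff_preimageI)
qed

text \<open>Central elements, and powers of \<open>t\<close> without rotation part, commute with \<open>t\<close>,
  so \<open>diff\<close> kills their vector parts.\<close>

lemma diff_mem_of_generates:
  assumes M: "invariant_subspace M" and X: "X \<subseteq> diff_preimage M"
    and gen: "carrier (wreath p) \<subseteq> group_center (wreath p) <#>\<^bsub>wreath p\<^esub> generate (wreath p) X"
    and e: "e \<in> vecs p"
  shows "diff e \<in> M"
proof -
  have "generate (wreath p) X \<subseteq> diff_preimage M"
    by (rule W.generate_subgroup_incl[OF X subgroup_diff_preimage[OF M]])
  moreover have "transl e \<in> group_center (wreath p) <#>\<^bsub>wreath p\<^esub> generate (wreath p) X"
    using gen transl_in_carrier[OF p_pos e] by blast
  ultimately obtain z g where z: "z \<in> group_center (wreath p)" and g: "g \<in> diff_preimage M"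
    and eq: "transl e = z \<cdot> g"
    unfolding set_mult_def by blast
  obtain v k where v: "v \<in> vecs p" "diff v \<in> M" and g_eq: "g = transl v \<cdot> tpow k"
    using g by (auto simp: diff_preimage_def)
  have z_carrier: "z \<in> carrier (wreath p)" and z_comm: "z \<cdot> t = t \<cdot> z"
    using z t_carrier by (auto simp: group_center_def)
  have z_snd: "snd z = 0"
    by (rule snd_central[OF p_pos z])
  have "snd (tpow k) = 0"
    using arg_cong[OF eq, of snd] by (simp add: g_eq z_snd snd_tpow)
  then have "diff (vec (tpow k)) = 0"
    using W.nat_pow_Suc2[OF t_carrier, of k] by (intro diff_vec_commuting) simp_all
  moreover have "diff (vec z) = 0"
    by (rule diff_vec_commuting[OF z_carrier z_snd z_comm])
  moreover have "e = vec z + (v + vec (tpow k))"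
    using arg_cong[OF eq, of vec] v(1) tpow_carrier[of k]
    by (simp add: g_eq z_snd rot_multiple wreath_carrier_iff)
  ultimately have "diff e = diff v"
    by (simp add: diff_add)
  with v(2) show ?thesis
    by simp
qed

end

section \<open>Short words\<close>

locale wreath_generators = wreath_rotation +
  fixes X :: "((nat \<Rightarrow> bool) \<times> nat) set"
  assumes odd_p: "odd p" and X_carrier: "X \<subseteq> carrier (wreath p)" and t_in_X: "t \<in> X"
    and generates: "carrier (wreath p) \<subseteq> group_center (wreath p) <#>\<^bsub>wreath p\<^esub> generate (wreath p) X"
begin

definition comm_vec :: "(nat \<Rightarrow> bool) \<times> nat \<Rightarrow> nat \<Rightarrow> bit" where
  "comm_vec x = vec (x \<cdot> t \<cdot> inv\<^bsub>wreath p\<^esub> x \<cdot> inv\<^bsub>wreath p\<^esub> t)"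

lemma comm_vec_normal_form:
  assumes "x \<in> X"
  obtains e k where "e \<in> vecs p" "x = transl e \<cdot> tpow k" "comm_vec x = diff e"
    "x \<cdot> t \<cdot> inv\<^bsub>wreath p\<^esub> x \<cdot> inv\<^bsub>wreath p\<^esub> t = transl (comm_vec x)"
proof -
  obtain e k where e: "e \<in> vecs p" and x: "x = transl e \<cdot> tpow k"
    using wreath_normal_form assms X_carrier by blast
  have comm: "x \<cdot> t \<cdot> inv\<^bsub>wreath p\<^esub> x \<cdot> inv\<^bsub>wreath p\<^esub> t = transl (diff e)"
    unfolding x by (rule commutator_normal_form[OF e])
  then have "comm_vec x = diff e"
    unfolding comm_vec_def by simp
  with that e x comm show ?thesis
    by simp
qed

lemma comm_vec_in_vecs:
  assumes "x \<in> X"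
  shows "comm_vec x \<in> vecs p"
proof -
  have "x \<cdot> t \<cdot> inv\<^bsub>wreath p\<^esub> x \<cdot> inv\<^bsub>wreath p\<^esub> t \<in> carrier (wreath p)"
    using assms X_carrier t_carrier by auto
  then show ?thesis
    unfolding comm_vec_def wreath_carrier_iff by blast
qed

definition comm_sum :: "(nat \<times> ((nat \<Rightarrow> bool) \<times> nat)) set \<Rightarrow> nat \<Rightarrow> bit" where
  "comm_sum R = (\<Sum>(j, x)\<in>R. rot p (j * snd t) (comm_vec x))"

text \<open>A pair \<open>(j, x) \<in> R\<close> stands for the commutator vector of \<open>x\<close> rotated \<open>j\<close> times by \<open>snd t\<close>;
  \<open>comm_span\<close> is the \<open>rot (snd t)\<close>-invariant subspace spanned by these and \<open>ones p\<close>.\<close>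

definition comm_span :: "(nat \<Rightarrow> bit) set" where
  "comm_span = {e. \<exists>R. finite R \<and> R \<subseteq> {..<p} \<times> X \<and> e + comm_sum R \<in> {0, ones p}}"

lemma comm_spanI:
  "finite R \<Longrightarrow> R \<subseteq> {..<p} \<times> X \<Longrightarrow> e + comm_sum R \<in> {0, ones p} \<Longrightarrow> e \<in> comm_span"
  unfolding comm_span_def by blast

lemma comm_spanE:
  assumes "e \<in> comm_span"
  obtains R where "finite R" "R \<subseteq> {..<p} \<times> X" "e + comm_sum R \<in> {0, ones p}"
  using assms unfolding comm_span_def by blast

lemma comm_sum_in_vecs: "comm_sum R \<in> vecs p"
  by (auto simp: comm_sum_def intro: vecs_sum)

lemma rot_comm_sum:
  assumes "R \<subseteq> {..<p} \<times> X"
  shows "rot p (snd t) (comm_sum R) = comm_sum ((\<lambda>(j, x). (Suc j mod p, x)) ` R)"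
proof -
  have "j = j'" if "j < p" "j' < p" "Suc j mod p = Suc j' mod p" for j j'
    using that by (auto simp: mod_Suc split: if_splits)
  then have inj: "inj_on (\<lambda>(j, x). (Suc j mod p, x)) R"
    using assms by (auto simp: inj_on_def)
  have rot_Suc: "rot p (Suc j mod p * snd t) v = rot p (snd t) (rot p (j * snd t) v)" for j v
  proof -
    have "rot p (Suc j mod p * snd t) v = rot p (Suc j * snd t) v"
      by (metis rot_mod mod_mult_left_eq)
    then show ?thesis
      by (simp add: rot_rot[OF p_pos])
  qed
  show ?thesis
    unfolding comm_sum_def sum.reindex[OF inj] by (simp add: rot_sum rot_Suc case_prod_unfold)
qed

lemma comm_span_subset_vecs: "comm_span \<subseteq> vecs p"
proof
  fix e
  assume "e \<in> comm_span"
  then obtain R where "e + comm_sum R \<in> {0, ones p}"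
    by (rule comm_spanE)
  then have "(e + comm_sum R) + comm_sum R \<in> vecs p"
    using comm_sum_in_vecs vecs_add zero_ones_in_vecs by blast
  then show "e \<in> vecs p"
    by (simp add: add.assoc)
qed

lemma comm_span_add:
  assumes "a \<in> comm_span" "b \<in> comm_span"
  shows "a + b \<in> comm_span"
proof -
  obtain A where A: "finite A" "A \<subseteq> {..<p} \<times> X" "a + comm_sum A \<in> {0, ones p}"
    using assms(1) by (rule comm_spanE)
  obtain B where B: "finite B" "B \<subseteq> {..<p} \<times> X" "b + comm_sum B \<in> {0, ones p}"
    using assms(2) by (rule comm_spanE)
  have "comm_sum (sym_diff A B) = comm_sum A + comm_sum B"
    unfolding comm_sum_def using A(1) B(1) by (rule sum_sym_diff)
  then have eq: "(a + b) + comm_sum (sym_diff A B) = (a + comm_sum A) + (b + comm_sum B)"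
    by (simp add: add_ac)
  have "(a + b) + comm_sum (sym_diff A B) \<in> {0, ones p}"
    unfolding eq by (rule zero_ones_add[OF A(3) B(3)])
  moreover have "finite (sym_diff A B)" "sym_diff A B \<subseteq> {..<p} \<times> X"
    using A(1,2) B(1,2) by auto
  ultimately show ?thesis
    by (intro comm_spanI)
qed

lemma comm_span_rot:
  assumes "a \<in> comm_span"
  shows "rot p (snd t) a \<in> comm_span"
proof -
  obtain R where R: "finite R" "R \<subseteq> {..<p} \<times> X" "a + comm_sum R \<in> {0, ones p}"
    using assms by (rule comm_spanE)
  define R' where "R' = (\<lambda>(j, x). (Suc j mod p, x)) ` R"
  have "rot p (snd t) a + comm_sum R' = rot p (snd t) (a + comm_sum R)"
    by (simp add: R'_def rot_comm_sum[OF R(2)] rot_add)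
  also have "\<dots> \<in> {0, ones p}"
    using R(3) by (rule rot_zero_ones)
  finally have "rot p (snd t) a + comm_sum R' \<in> {0, ones p}" .
  moreover have "finite R'" "R' \<subseteq> {..<p} \<times> X"
    using R(1,2) p_pos by (auto simp: R'_def)
  ultimately show ?thesis
    by (intro comm_spanI)
qed

lemma invariant_subspace_comm_span: "invariant_subspace comm_span"
proof -
  have "0 + comm_sum {} = 0"
    by (simp add: comm_sum_def)
  then have "0 \<in> comm_span"
    by (intro comm_spanI[of "{}"]) simp_all
  then show ?thesis
    using comm_span_subset_vecs comm_span_add comm_span_rot by (simp add: invariant_subspace_def)
qed

lemma X_subset_diff_preimage: "X \<subseteq> diff_preimage comm_span"
proof
  fix x
  assume x: "x \<in> X"
  then obtain e k where e: "e \<in> vecs p" "x = transl e \<cdot> tpow k" "comm_vec x = diff e"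
    by (rule comm_vec_normal_form)
  have "comm_sum {(0, x)} = diff e"
    using e(3) comm_vec_in_vecs[OF x] by (simp add: comm_sum_def rot_multiple)
  then have "diff e \<in> comm_span"
    using x p_pos by (intro comm_spanI[of "{(0, x)}"]) simp_all
  then show "x \<in> diff_preimage comm_span"
    using e(1,2) by (simp add: diff_preimageI)
qed

lemma vecs_subset_comm_span: "vecs p \<subseteq> comm_span"
proof
  fix e
  assume e: "e \<in> vecs p"
  obtain w where w: "w \<in> vecs p" "e + diff w \<in> {0, ones p}"
    using vecs_eq_const_plus_diff[OF prime_p odd_p snd_t_not_dvd e] by (auto simp: diff_def)
  have "diff w \<in> comm_span"
    by (rule diff_mem_of_generates[OF invariant_subspace_comm_span X_subset_diff_preimage generates w(1)])
  then obtain R where R: "finite R" "R \<subseteq> {..<p} \<times> X" "diff w + comm_sum R \<in> {0, ones p}"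
    by (rule comm_spanE)
  have "e + comm_sum R = (e + diff w) + (diff w + comm_sum R)"
    by (simp add: add_ac)
  then have "e + comm_sum R \<in> {0, ones p}"
    using zero_ones_add[OF w(2) R(3)] by simp
  with R(1,2) show "e \<in> comm_span"
    by (rule comm_spanI)
qed

lemma short_comm_sum:
  assumes "e \<in> vecs p"
  obtains R where "finite R" "R \<subseteq> {..<p} \<times> X" "card R \<le> p - 1" "e + comm_sum R \<in> {0, ones p}"
proof -
  have "e \<in> comm_span"
    using vecs_subset_comm_span assms by blast
  then obtain R where R: "finite R" "R \<subseteq> {..<p} \<times> X" "e + comm_sum R \<in> {0, ones p}"
    by (rule comm_spanE)
  obtain R' where R': "R' \<subseteq> R" "card R' \<le> p - 1" "comm_sum R' + comm_sum R \<in> {0, ones p}"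
    using subset_with_same_sum_mod_ones[OF p_pos R(1), of "\<lambda>(j, x). rot p (j * snd t) (comm_vec x)"]
    by (auto simp: comm_sum_def)
  have "e + comm_sum R' = (e + comm_sum R) + (comm_sum R' + comm_sum R)"
    by (simp add: add_ac)
  then have "e + comm_sum R' \<in> {0, ones p}"
    using zero_ones_add[OF R(3) R'(3)] by simp
  moreover have "finite R'" "R' \<subseteq> {..<p} \<times> X"
    using R'(1) R(1,2) finite_subset by blast+
  ultimately show ?thesis
    using that R'(2) by blast
qed

lemma commutator_words:
  assumes "finite A" "A \<subseteq> X"
  shows "\<exists>ws. set ws \<subseteq> X \<union> m_inv (wreath p) ` X \<and> length ws = 4 * card A \<and>
    word_prod (wreath p) ws = transl (\<Sum>x\<in>A. comm_vec x)"
  using assms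
proof (induction A rule: finite_induct)
  case empty
  have "(\<Sum>x\<in>{}. comm_vec x) = 0"
    by simp
  then have "word_prod (wreath p) [] = transl (\<Sum>x\<in>{}. comm_vec x)"
    by (simp only: word_prod_Nil transl_zero[of p])
  moreover have "set [] \<subseteq> X \<union> m_inv (wreath p) ` X" "length [] = 4 * card {}"
    by simp_all
  ultimately show ?case
    by blast
next
  case (insert x A)
  then obtain ws where ws: "set ws \<subseteq> X \<union> m_inv (wreath p) ` X" "length ws = 4 * card A"
    "word_prod (wreath p) ws = transl (\<Sum>x\<in>A. comm_vec x)"
    by auto
  have x: "x \<in> X"
    using insert.prems by simp
  then have x_carrier: "x \<in> carrier (wreath p)"
    using X_carrier by blast
  have comm: "x \<cdot> t \<cdot> inv\<^bsub>wreath p\<^esub> x \<cdot> inv\<^bsub>wreath p\<^esub> t = transl (comm_vec x)"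
    using comm_vec_normal_form[OF x] by metis
  let ?ws = "[x, t, inv\<^bsub>wreath p\<^esub> x, inv\<^bsub>wreath p\<^esub> t] @ ws"
  have ws_carrier: "set ws \<subseteq> carrier (wreath p)"
    using ws(1) X_carrier W.inv_closed by blast
  have "word_prod (wreath p) ?ws = transl (comm_vec x) \<cdot> transl (\<Sum>x\<in>A. comm_vec x)"
    using x_carrier t_carrier ws_carrier by (simp add: W.word_prod_closed W.m_assoc comm[symmetric] ws(3)[symmetric])
  also have "\<dots> = transl (\<Sum>x\<in>insert x A. comm_vec x)"
  proof -
    have "(\<Sum>x\<in>A. comm_vec x) \<in> vecs p"
      using insert.prems comm_vec_in_vecs by (intro vecs_sum) auto
    then show ?thesis
      using insert.hyps by (simp add: transl_mult)
  qed
  finally have "word_prod (wreath p) ?ws = transl (\<Sum>x\<in>insert x A. comm_vec x)" .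
  moreover have "set ?ws \<subseteq> X \<union> m_inv (wreath p) ` X"
    using ws(1) x t_in_X by auto
  moreover have "length ?ws = 4 * card (insert x A)"
    using ws(2) insert.hyps by simp
  ultimately show ?case
    by blast
qed

lemma level_Suc:
  "{y \<in> R. fst y < Suc n} = {y \<in> R. fst y < n} \<union> Pair n ` {x. (n, x) \<in> R}"
  "{y \<in> R. fst y < n} \<inter> Pair n ` {x. (n, x) \<in> R} = {}"
  by (auto simp: less_Suc_eq)

lemma
  assumes "finite R"
  shows card_level_Suc:
      "card {y \<in> R. fst y < Suc n} = card {y \<in> R. fst y < n} + card {x. (n, x) \<in> R}"
    and comm_sum_level_Suc: "comm_sum {y \<in> R. fst y < Suc n}
      = comm_sum {y \<in> R. fst y < n} + rot p (n * snd t) (\<Sum>x | (n, x) \<in> R. comm_vec x)"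
proof -
  have fin: "finite {y \<in> R. fst y < n}" "finite (Pair n ` {x. (n, x) \<in> R})"
    using assms by (auto intro: finite_subset)
  have inj: "inj_on (Pair n) {x. (n, x) \<in> R}"
    by (simp add: inj_on_def)
  show "card {y \<in> R. fst y < Suc n} = card {y \<in> R. fst y < n} + card {x. (n, x) \<in> R}"
    unfolding level_Suc(1) card_Un_disjoint[OF fin level_Suc(2)] card_image[OF inj] ..
  show "comm_sum {y \<in> R. fst y < Suc n}
      = comm_sum {y \<in> R. fst y < n} + rot p (n * snd t) (\<Sum>x | (n, x) \<in> R. comm_vec x)"
    unfolding comm_sum_def level_Suc(1) sum.union_disjoint[OF fin level_Suc(2)]
    by (simp add: sum.reindex[OF inj] rot_sum)
qed

lemma word_prod_next_level:
  assumes "e \<in> vecs p" "A \<subseteq> X"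
    and ws: "set ws \<subseteq> X \<union> m_inv (wreath p) ` X" "word_prod (wreath p) ws = transl e \<cdot> tpow n"
    and ws': "set ws' \<subseteq> X \<union> m_inv (wreath p) ` X" "word_prod (wreath p) ws' = transl (\<Sum>x\<in>A. comm_vec x)"
  shows "word_prod (wreath p) (ws @ ws' @ [t]) = transl (e + rot p (n * snd t) (\<Sum>x\<in>A. comm_vec x)) \<cdot> tpow (Suc n)"
proof -
  have "set ws \<subseteq> carrier (wreath p)" "set ws' \<subseteq> carrier (wreath p)"
    using ws(1) ws'(1) X_carrier W.inv_closed by blast+
  then have "word_prod (wreath p) (ws @ ws' @ [t])
      = (transl e \<cdot> tpow n) \<cdot> (transl (\<Sum>x\<in>A. comm_vec x) \<cdot> tpow 1)"
    using t_carrier by (simp add: W.word_prod_append ws(2) ws'(2))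
  moreover have "(\<Sum>x\<in>A. comm_vec x) \<in> vecs p"
    using assms(2) comm_vec_in_vecs by (intro vecs_sum) blast
  ultimately show ?thesis
    using mult_normal_form[OF assms(1), where k = n and k' = 1] by simp
qed

lemma level_words:
  assumes R: "finite R" "R \<subseteq> {..<p} \<times> X"
  shows "\<exists>ws. set ws \<subseteq> X \<union> m_inv (wreath p) ` X \<and> length ws = 4 * card {y \<in> R. fst y < n} + n \<and>
    word_prod (wreath p) ws = transl (comm_sum {y \<in> R. fst y < n}) \<cdot> tpow n"
proof (induction n)
  case 0
  have "comm_sum {y \<in> R. fst y < 0} = 0"
    by (simp add: comm_sum_def)
  then have "word_prod (wreath p) [] = transl (comm_sum {y \<in> R. fst y < 0}) \<cdot> tpow 0"
    by (simp only: word_prod_Nil transl_zero[of p] W.nat_pow_0 W.l_one W.one_closed)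
  then show ?case
    by (intro exI[of _ "[]"]) simp
next
  case (Suc n)
  then obtain ws where ws: "set ws \<subseteq> X \<union> m_inv (wreath p) ` X" "length ws = 4 * card {y \<in> R. fst y < n} + n"
    "word_prod (wreath p) ws = transl (comm_sum {y \<in> R. fst y < n}) \<cdot> tpow n"
    by blast
  define A where "A = {x. (n, x) \<in> R}"
  have A: "finite A" "A \<subseteq> X"
  proof -
    have "A \<subseteq> snd ` R"
      by (force simp: A_def)
    then show "finite A" "A \<subseteq> X"
      using R by (auto simp: A_def intro: finite_subset)
  qed
  then obtain ws' where ws': "set ws' \<subseteq> X \<union> m_inv (wreath p) ` X" "length ws' = 4 * card A"
    "word_prod (wreath p) ws' = transl (\<Sum>x\<in>A. comm_vec x)"
    using commutator_words by blast
  have "card {y \<in> R. fst y < Suc n} = card {y \<in> R. fst y < n} + card A"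
    unfolding A_def using R(1) by (rule card_level_Suc)
  then have "length (ws @ ws' @ [t]) = 4 * card {y \<in> R. fst y < Suc n} + Suc n"
    using ws(2) ws'(2) by simp
  moreover have "set (ws @ ws' @ [t]) \<subseteq> X \<union> m_inv (wreath p) ` X"
    using ws(1) ws'(1) t_in_X by auto
  moreover have "word_prod (wreath p) (ws @ ws' @ [t]) = transl (comm_sum {y \<in> R. fst y < Suc n}) \<cdot> tpow (Suc n)"
    unfolding comm_sum_level_Suc[OF R(1), of n, folded A_def]
    using ws(1,3) ws'(1,3) A(2) comm_sum_in_vecs by (intro word_prod_next_level) auto
  ultimately show ?case
    by blast
qed

theorem short_words:
  assumes "g \<in> carrier (wreath p)"
  shows "\<exists>z\<in>group_center (wreath p). \<exists>ws. set ws \<subseteq> X \<union> m_inv (wreath p) ` X \<and>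
    length ws \<le> 6 * p - 5 \<and> g = z \<cdot> word_prod (wreath p) ws"
proof -
  obtain e k where e: "e \<in> vecs p" and k: "k < p" and g: "g = transl e \<cdot> tpow k"
    using wreath_normal_form[OF assms] by blast
  obtain R where R: "finite R" "R \<subseteq> {..<p} \<times> X" "card R \<le> p - 1" "e + comm_sum R \<in> {0, ones p}"
    using short_comm_sum[OF e] by blast
  have R_eq: "{y \<in> R. fst y < p} = R"
    using R(2) by auto
  obtain ws where ws: "set ws \<subseteq> X \<union> m_inv (wreath p) ` X" "length ws = 4 * card R + p"
    "word_prod (wreath p) ws = transl (comm_sum R) \<cdot> tpow p"
    using level_words[OF R(1,2), of p] unfolding R_eq by blast
  obtain w where w: "w \<in> {0, ones p}" "tpow p = transl w"
    using tpow_p by blast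
  define z where "z = transl (e + comm_sum R + w)"
  have "z \<in> group_center (wreath p)"
    unfolding z_def using p_pos zero_ones_add[OF R(4) w(1)] by (rule transl_central)
  moreover have "word_prod (wreath p) (ws @ replicate k t) = transl (comm_sum R + w) \<cdot> tpow k"
  proof -
    have "set ws \<subseteq> carrier (wreath p)" "set (replicate k t) \<subseteq> carrier (wreath p)"
      using ws(1) X_carrier W.inv_closed t_carrier by (blast, simp add: set_replicate_conv_if)
    then have "word_prod (wreath p) (ws @ replicate k t) = transl (comm_sum R) \<cdot> tpow p \<cdot> tpow k"
      using t_carrier by (simp add: W.word_prod_append W.word_prod_replicate ws(3))
    also have "\<dots> = transl (comm_sum R + w) \<cdot> tpow k"
      using w p_pos by (auto simp: w(2) transl_mult)
    finally show ?thesis .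
  qed
  moreover have "g = z \<cdot> (transl (comm_sum R + w) \<cdot> tpow k)"
    using e w p_pos comm_sum_in_vecs[of R]
    by (auto simp: g z_def W.m_assoc[symmetric] transl_in_carrier transl_mult add_ac)
  moreover have "length (ws @ replicate k t) \<le> 6 * p - 5"
    using ws(2) R(3) k by simp
  moreover have "set (ws @ replicate k t) \<subseteq> X \<union> m_inv (wreath p) ` X"
    using ws(1) t_in_X by auto
  ultimately show ?thesis
    by metis
qed

end

lemma subgroup_snd_zero:
  assumes p: "0 < p"
  shows "subgroup {g \<in> carrier (wreath p). snd g = 0} (wreath p)"
proof -
  interpret W: group "wreath p"
    by (rule wreath_group[OF p])
  show ?thesis
  proof (rule W.subgroupI)
    fix g
    assume "g \<in> {g \<in> carrier (wreath p). snd g = 0}"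
    then have g: "g \<in> carrier (wreath p)" "snd g = 0"
      by simp_all
    then have "snd (inv\<^bsub>wreath p\<^esub> g) mod p = snd (inv\<^bsub>wreath p\<^esub> g \<otimes>\<^bsub>wreath p\<^esub> g)"
      by (simp only: snd_mult add_0_right)
    also have "\<dots> = 0"
      using g(1) by simp
    finally show "inv\<^bsub>wreath p\<^esub> g \<in> {g \<in> carrier (wreath p). snd g = 0}"
      using W.inv_closed[OF g(1)] by (simp add: wreath_carrier_iff)
  next
    have "\<one>\<^bsub>wreath p\<^esub> \<in> {g \<in> carrier (wreath p). snd g = 0}"
      by simp
    then show "{g \<in> carrier (wreath p). snd g = 0} \<noteq> {}"
      by blast
  qed auto
qed

text \<open>Otherwise everything would lie in the subgroup of translations.\<close>

lemma exists_rotation_generator: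
  assumes p: "prime p" and X: "X \<subseteq> carrier (wreath p)"
    and gen: "carrier (wreath p) \<subseteq> group_center (wreath p) <#>\<^bsub>wreath p\<^esub> generate (wreath p) X"
  shows "\<exists>t\<in>X. snd t \<noteq> 0"
proof (rule ccontr)
  assume no_rotation: "\<not> (\<exists>t\<in>X. snd t \<noteq> 0)"
  have p_pos: "0 < p"
    using p prime_gt_0_nat by blast
  let ?B = "{g \<in> carrier (wreath p). snd g = 0}"
  have "generate (wreath p) X \<subseteq> ?B"
    using X no_rotation
    by (intro group.generate_subgroup_incl[OF wreath_group[OF p_pos] _ subgroup_snd_zero[OF p_pos]]) auto
  have "carrier (wreath p) \<subseteq> ?B"
  proof
    fix g
    assume g: "g \<in> carrier (wreath p)"
    then obtain z h where z: "z \<in> group_center (wreath p)" and h: "h \<in> generate (wreath p) X"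
      and "g = z \<otimes>\<^bsub>wreath p\<^esub> h"
      using gen unfolding set_mult_def by blast
    then show "g \<in> ?B"
      using g snd_central[OF p_pos z] \<open>generate (wreath p) X \<subseteq> ?B\<close> by auto
  qed
  moreover have "((\<lambda>_. False), 1) \<in> carrier (wreath p)"
    using prime_gt_1_nat[OF p] by (simp add: wreath_carrier_iff vec_def bits_def vecs_def)
  ultimately show False
    by auto
qed

theorem wreath_short_words:
  assumes "prime p" "odd p" "X \<subseteq> carrier (wreath p)"
    and gen: "carrier (wreath p) \<subseteq> group_center (wreath p) <#>\<^bsub>wreath p\<^esub> generate (wreath p) X"
    and g: "g \<in> carrier (wreath p)"
  shows "\<exists>z\<in>group_center (wreath p). \<exists>ws. set ws \<subseteq> X \<union> m_inv (wreath p) ` X \<and>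
    length ws \<le> 6 * p - 5 \<and> g = z \<otimes>\<^bsub>wreath p\<^esub> word_prod (wreath p) ws"
proof -
  obtain t where "t \<in> X" "snd t \<noteq> 0"
    using exists_rotation_generator[OF assms(1,3) gen] by blast
  then interpret wreath_generators p t X
    using assms by unfold_locales auto
  show ?thesis
    by (rule short_words[OF g])
qed

lemma cayley_diam_Gp_le:
  assumes p: "prime p" "odd p" and S: "S \<subseteq> carrier (Gp p)" and gen: "generate (Gp p) S = carrier (Gp p)"
  shows "cayley_diam (Gp p) S \<le> 6 * p - 5"
proof -
  let ?Z = "group_center (wreath p)"
  interpret Z: normal ?Z "wreath p"
    using p prime_gt_0_nat by (intro group.group_center_normal wreath_group) blast
  define X where "X = {a \<in> carrier (wreath p). ?Z #>\<^bsub>wreath p\<^esub> a \<in> S}"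
  have X_carrier: "X \<subseteq> carrier (wreath p)"
    by (auto simp: X_def)
  have image_X: "(\<lambda>a. ?Z #>\<^bsub>wreath p\<^esub> a) ` X = S"
    using S by (auto simp: X_def Gp_def carrier_FactGroup)
  have "carrier (wreath p) \<subseteq> ?Z <#>\<^bsub>wreath p\<^esub> generate (wreath p) X"
    using Z.carrier_subset_set_mult_generate[OF X_carrier] gen by (simp add: image_X Gp_def)
  then show ?thesis
    unfolding Gp_def
    by (intro Z.cayley_diam_FactGroup_le[OF X_carrier]) (use image_X wreath_short_words[OF p X_carrier] in auto)
qed

lemma diam_max_Gp_le:
  assumes "prime p" "odd p"
  shows "diam_max (Gp p) \<le> 6 * p - 5"
proof (cases "{cayley_diam (Gp p) S | S. S \<subseteq> carrier (Gp p) \<and> generate (Gp p) S = carrier (Gp p)} = {}")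
  case True
  then show ?thesis
    unfolding diam_max_def by (simp only: Sup_nat_empty)
next
  case False
  then show ?thesis
    unfolding diam_max_def using cayley_diam_Gp_le[OF assms] by (intro cSup_least) auto
qed

theorem theorem4:
  fixes p :: nat
  assumes "prime p" and "odd p"
  shows "real (diam_max (Gp p)) \<le> 13 / 2 * (real p - 1)"
proof -
  have "3 \<le> p"
    using assms prime_ge_2_nat[OF assms(1)] by (cases "p = 2") auto
  then have "real (6 * p - 5) \<le> 13 / 2 * (real p - 1)"
    by simp
  then show ?thesis
    using diam_max_Gp_le[OF assms] by (meson of_nat_le_iff order_trans)
qed

end
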